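(* Let $a,c,d$ be generic parameters. Define $\alpha_0^*=\beta_0^*=\alpha_0^\dagger=\beta_0^\dagger=1$ and, for $n\ge1$, \begin{align*} \alpha_n^*&=\frac{(aq,c,d;q)_n}{(aq^2/c,aq^2/d,q;q)_n}\Big(\frac{-aq}{cd}\Big)^n q^{(n^2+n)/2}- aq^{2n-1}\frac{(aq,c,d;q)_{n-1}}{(aq^2/c,aq^2/d,q;q)_{n-1}}\Big(\frac{-aq}{cd}\Big)^{n-1} q^{(n^2-n)/2},\\ \beta_n^*&=\frac{(aq^2/cd;q)_n}{(aq^2/c,aq^2/d,q;q)_n},\\ \alpha_n^{\dagger}&=q^n\frac{(aq,c,d;q)_n}{(aq^2/c,aq^2/d,q;q)_n}\Big(\frac{-aq}{cd}\Big)^n q^{(n^2+n)/2}- q^{n-1}\frac{(aq,c,d;q)_{n-1}}{(aq^2/c,aq^2/d,q;q)_{n-1}}\Big(\frac{-aq}{cd}\Big)^{n-1} q^{(n^2-n)/2},\\ \beta_n^{\dagger}&=q^n\frac{(aq^2/cd;q)_n}{(aq^2/c,aq^2/d,q;q)_n}. \end{align*} Then $(\alpha_n^*,\beta_n^* )$ and $(\alpha_n^\dagger,\beta_n^\dagger)$ are Bailey pairs relative to $a$.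
   Context: Notation: $(x;q)_n=\prod_{i=0}^{n-1}(1-xq^i)$, $(x_1,\dots,x_j;q)_n=(x_1;q)_n\cdots(x_j;q)_n$. A pair of sequences $(\alpha_n,\beta_n)_{n\ge0}$ is a Bailey pair relative to $a$ if $\alpha_0=1$ and for all $n\ge0$, $\beta_n=\sum_{r=0}^n\frac{\alpha_r}{(q;q)_{n-r}(aq;q)_{n+r}}$. *)

theory Defs
  imports Complex_Main
begin

definition qpoch :: "complex \<Rightarrow> complex \<Rightarrow> nat \<Rightarrow> complex" where
  "qpoch x q n = (\<Prod>i<n. 1 - x * q ^ i)"

definition bailey_pair :: "complex \<Rightarrow> complex \<Rightarrow> (nat \<Rightarrow> complex) \<Rightarrow> (nat \<Rightarrow> complex) \<Rightarrow> bool" where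
  "bailey_pair a q \<alpha> \<beta> \<longleftrightarrow> \<alpha> 0 = 1 \<and>
     (\<forall>n. \<beta> n = (\<Sum>r\<le>n. \<alpha> r / (qpoch q q (n - r) * qpoch (a * q) q (n + r))))"

definition T_term :: "complex \<Rightarrow> complex \<Rightarrow> complex \<Rightarrow> complex \<Rightarrow> nat \<Rightarrow> complex" where
  "T_term a c d q n =
     qpoch (a*q) q n * qpoch c q n * qpoch d q n
     / (qpoch (a*q^2/c) q n * qpoch (a*q^2/d) q n * qpoch q q n)
     * (- a * q / (c * d)) ^ n * q ^ ((n^2 + n) div 2)"

definition alpha_star :: "complex \<Rightarrow> complex \<Rightarrow> complex \<Rightarrow> complex \<Rightarrow> nat \<Rightarrow> complex" where
  "alpha_star a c d q n = (if n = 0 then 1 else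
     T_term a c d q n - a * q ^ (2*n - 1) * T_term a c d q (n - 1))"

definition beta_star :: "complex \<Rightarrow> complex \<Rightarrow> complex \<Rightarrow> complex \<Rightarrow> nat \<Rightarrow> complex" where
  "beta_star a c d q n = (if n = 0 then 1 else
     qpoch (a*q^2/(c*d)) q n / (qpoch (a*q^2/c) q n * qpoch (a*q^2/d) q n * qpoch q q n))"

definition alpha_dagger :: "complex \<Rightarrow> complex \<Rightarrow> complex \<Rightarrow> complex \<Rightarrow> nat \<Rightarrow> complex" where
  "alpha_dagger a c d q n = (if n = 0 then 1 else
     q ^ n * T_term a c d q n - q ^ (n - 1) * T_term a c d q (n - 1))"

definition beta_dagger :: "complex \<Rightarrow> complex \<Rightarrow> complex \<Rightarrow> complex \<Rightarrow> nat \<Rightarrow> complex" where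
  "beta_dagger a c d q n = (if n = 0 then 1 else
     q ^ n * qpoch (a*q^2/(c*d)) q n / (qpoch (a*q^2/c) q n * qpoch (a*q^2/d) q n * qpoch q q n))"

end

theory Submission
  imports Defs
begin

(* With T_r = T_term a c d q r, the sums
     S_n = sum_{r<=n} T_r (1 - a q^(2r+1)) / ((q;q)_(n-r) (aq;q)_(n+r+1))
   satisfy (1 - aq^(n+2)/c)(1 - aq^(n+2)/d)(1 - q^(n+1)) S_(n+1) = (1 - aq^(n+2)/(cd)) S_n,
   which is proved by creative telescoping with an explicit certificate (wp_certificate);
   beta*_n satisfies the same recurrence, so (T_n (1 - aq^(2n+1))/(1 - aq), beta*_n) is a Bailey
   pair relative to aq.
   A Bailey pair relative to aq of this shape yields pairs relative to a: the partial fraction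
   identity (1 - aq^(n+r+1)) - aq^(2r+1) (1 - q^(n-r)) = 1 - aq^(2r+1) splits every term of the
   aq-sum into a difference of two terms of the a-sum, and regrouping them gives
   alpha_n = T_n - aq^(2n-1) T_(n-1).  Weighting the same splitting by q^r gives the dagger pair. *)

lemma qpoch_0 [simp]: "qpoch x q 0 = 1"
  by (simp add: qpoch_def)

lemma qpoch_Suc: "qpoch x q (Suc n) = qpoch x q n * (1 - x * q ^ n)"
  by (simp add: qpoch_def)

lemma qpoch_Suc_shift: "qpoch x q (Suc n) = (1 - x) * qpoch (x * q) q n"
  unfolding qpoch_def prod.lessThan_Suc_shift by (simp add: mult.assoc)

lemma qpoch_factor_nonzero: "(\<And>n. qpoch x q n \<noteq> 0) \<Longrightarrow> 1 - x * q ^ n \<noteq> 0"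
  by (metis mult_zero_right qpoch_Suc)

lemma sum_atMost_minus_shifted:
  fixes f g :: "nat \<Rightarrow> 'a::ab_group_add"
  shows "(\<Sum>r\<le>n. f r - (if r = 0 then 0 else g (r - 1)))
       = (\<Sum>r\<le>n. f r - (if r < n then g r else 0))"
proof -
  have shifted: "(\<Sum>r\<le>n. if r = 0 then 0 else g (r - 1)) = (\<Sum>r<n. g r)"
    by (cases n) (simp_all add: sum.atMost_Suc_shift lessThan_Suc_atMost del: sum.atMost_Suc)
  have truncated: "(\<Sum>r\<le>n. if r < n then g r else 0) = (\<Sum>r<n. g r)"
    by (rule sum.mono_neutral_cong_right) auto
  show ?thesis
    by (simp only: sum_subtractf shifted truncated)
qed

lemma bailey_summand_difference:
  fixes a q g :: complex and Y W Z :: "nat \<Rightarrow> complex"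
  assumes hq: "\<And>n. qpoch q q n \<noteq> 0" and ha: "\<And>n. qpoch (a*q) q n \<noteq> 0"
    and rel: "\<And>r j. Y r * (1 - a*q^(2*r+j+2)) - W r * (1 - q^(j+1)) = Z (r+j+1) * (1 - a*q^(2*r+1))"
    and diag: "Y n = Z n"
    and "r \<le> n"
  shows "Y r * g / (qpoch q q (n-r) * qpoch (a*q) q (n+r))
       - (if r < n then W r * g / (qpoch q q (n - Suc r) * qpoch (a*q) q (n + Suc r)) else 0)
     = Z n * (g * (1 - a*q^(2*r+1)) / (qpoch q q (n-r) * qpoch (a*q) q (n+r+1)))"
proof (cases "r < n")
  case True
  then obtain j where n: "n = r + j + 1"
    by (metis add.commute add_Suc_right less_iff_Suc_add plus_1_eq_Suc)
  define Q P where "Q = qpoch q q j" and "P = qpoch (a*q) q (n+r)"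
  have E: "a*q*q^(n+r) = a*q^(2*r+j+2)"
    unfolding n by (simp add: mult_2 add_ac flip: power_Suc)
  have Q1: "qpoch q q (n-r) = Q * (1 - q^(j+1))" and Q2: "qpoch q q (n - Suc r) = Q"
    unfolding Q_def n by (simp_all add: qpoch_Suc)
  have P1: "qpoch (a*q) q (n + Suc r) = P * (1 - a*q^(2*r+j+2))"
    and P2: "qpoch (a*q) q (n+r+1) = P * (1 - a*q^(2*r+j+2))"
    unfolding P_def by (simp_all add: qpoch_Suc E)
  define E1 E2 where "E1 = 1 - q^(j+1)" and "E2 = 1 - a*q^(2*r+j+2)"
  have nz: "Q \<noteq> 0" "P \<noteq> 0" "E1 \<noteq> 0" "E2 \<noteq> 0"
    using hq ha qpoch_factor_nonzero[OF hq, of j] qpoch_factor_nonzero[OF ha, of "n+r"]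
    by (simp_all add: Q_def P_def E1_def E2_def E)
  have "Y r * g / (Q * E1 * P) - W r * g / (Q * (P * E2)) = g * (Y r * E2 - W r * E1) / (Q * E1 * (P * E2))"
    using nz by (simp add: field_simps)
  also have "\<dots> = Z n * (g * (1 - a*q^(2*r+1)) / (Q * E1 * (P * E2)))"
    unfolding E1_def E2_def rel n by (simp only: mult_ac times_divide_eq_right)
  finally show ?thesis
    using True by (simp only: Q1 Q2 P1 P2 E1_def E2_def if_True flip: P_def)
next
  case False
  with \<open>r \<le> n\<close> have r: "r = n" by simp
  have E: "a*q*q^(n+n) = a*q^(2*n+1)"
    by (simp add: mult_2 flip: power_Suc)
  have P: "qpoch (a*q) q (n+n+1) = qpoch (a*q) q (n+n) * (1 - a*q^(2*n+1))"
    by (simp add: qpoch_Suc E)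
  have "1 - a*q^(2*n+1) \<noteq> 0"
    using qpoch_factor_nonzero[OF ha, of "n+n"] by (simp add: E)
  then show ?thesis
    using ha[of "n+n"] unfolding r P by (simp add: diag field_simps)
qed

lemma bailey_sum_telescoping:
  fixes a q :: complex and \<gamma> Y W Z :: "nat \<Rightarrow> complex"
  assumes hq: "\<And>n. qpoch q q n \<noteq> 0" and ha: "\<And>n. qpoch (a*q) q n \<noteq> 0"
    and rel: "\<And>r j. Y r * (1 - a*q^(2*r+j+2)) - W r * (1 - q^(j+1)) = Z (r+j+1) * (1 - a*q^(2*r+1))"
    and diag: "Y n = Z n"
  shows "(\<Sum>r\<le>n. (Y r * \<gamma> r - (if r = 0 then 0 else W (r-1) * \<gamma> (r-1)))
                  / (qpoch q q (n-r) * qpoch (a*q) q (n+r)))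
       = Z n * (\<Sum>r\<le>n. \<gamma> r * (1 - a*q^(2*r+1)) / (qpoch q q (n-r) * qpoch (a*q) q (n+r+1)))"
proof -
  define f g where "f r = Y r * \<gamma> r / (qpoch q q (n-r) * qpoch (a*q) q (n+r))"
    and "g r = W r * \<gamma> r / (qpoch q q (n - Suc r) * qpoch (a*q) q (n + Suc r))" for r
  have "(\<Sum>r\<le>n. (Y r * \<gamma> r - (if r = 0 then 0 else W (r-1) * \<gamma> (r-1)))
                  / (qpoch q q (n-r) * qpoch (a*q) q (n+r)))
      = (\<Sum>r\<le>n. f r - (if r = 0 then 0 else g (r - 1)))"
    by (rule sum.cong) (auto simp: f_def g_def diff_divide_distrib)
  also have "\<dots> = (\<Sum>r\<le>n. f r - (if r < n then g r else 0))"
    by (rule sum_atMost_minus_shifted)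
  also have "\<dots> = (\<Sum>r\<le>n. Z n * (\<gamma> r * (1 - a*q^(2*r+1)) / (qpoch q q (n-r) * qpoch (a*q) q (n+r+1))))"
    unfolding f_def g_def
    by (rule sum.cong[OF refl], rule bailey_summand_difference[OF hq ha rel diag]) simp
  finally show ?thesis
    by (simp add: sum_distrib_left)
qed

lemma bailey_pair_relative_aqD:
  fixes a q :: complex and \<gamma> \<beta> :: "nat \<Rightarrow> complex"
  assumes ha: "\<And>n. qpoch (a*q) q n \<noteq> 0"
    and pair: "bailey_pair (a*q) q (\<lambda>n. \<gamma> n * (1 - a*q^(2*n+1)) / (1 - a*q)) \<beta>"
  shows "\<gamma> 0 = 1"
    and "\<beta> n = (\<Sum>r\<le>n. \<gamma> r * (1 - a*q^(2*r+1)) / (qpoch q q (n-r) * qpoch (a*q) q (n+r+1)))"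
proof -
  have "1 - a*q \<noteq> 0"
    using qpoch_factor_nonzero[OF ha, of 0] by simp
  then show "\<gamma> 0 = 1"
    using pair by (simp add: bailey_pair_def)
  show "\<beta> n = (\<Sum>r\<le>n. \<gamma> r * (1 - a*q^(2*r+1)) / (qpoch q q (n-r) * qpoch (a*q) q (n+r+1)))"
    using pair by (simp add: bailey_pair_def qpoch_Suc_shift mult_ac)
qed

lemma bailey_pair_from_relative_aq:
  fixes a q :: complex and \<gamma> \<beta> :: "nat \<Rightarrow> complex"
  assumes hq: "\<And>n. qpoch q q n \<noteq> 0" and ha: "\<And>n. qpoch (a*q) q n \<noteq> 0"
    and pair: "bailey_pair (a*q) q (\<lambda>n. \<gamma> n * (1 - a*q^(2*n+1)) / (1 - a*q)) \<beta>"
  shows "bailey_pair a q (\<lambda>n. if n = 0 then 1 else \<gamma> n - a*q^(2*n-1) * \<gamma> (n-1)) \<beta>"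
proof -
  note \<gamma>0 = bailey_pair_relative_aqD(1)[OF ha pair]
  have rel: "1 * (1 - a*q^(2*r+j+2)) - a*q^(2*r+1) * (1 - q^(j+1)) = 1 * (1 - a*q^(2*r+1))"
    for r j :: nat
    by (simp add: algebra_simps flip: power_add)
  have "(if r = 0 then 1 else \<gamma> r - a*q^(2*r-1) * \<gamma> (r-1))
      = 1 * \<gamma> r - (if r = 0 then 0 else a*q^(2*(r-1)+1) * \<gamma> (r-1))" for r
    by (cases r) (simp_all add: \<gamma>0)
  then show ?thesis
    unfolding bailey_pair_def bailey_pair_relative_aqD(2)[OF ha pair]
    using bailey_sum_telescoping[OF hq ha rel] by simp
qed

lemma bailey_pair_from_relative_aq_power:
  fixes a q :: complex and \<gamma> \<beta> :: "nat \<Rightarrow> complex"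
  assumes hq: "\<And>n. qpoch q q n \<noteq> 0" and ha: "\<And>n. qpoch (a*q) q n \<noteq> 0"
    and pair: "bailey_pair (a*q) q (\<lambda>n. \<gamma> n * (1 - a*q^(2*n+1)) / (1 - a*q)) \<beta>"
  shows "bailey_pair a q (\<lambda>n. if n = 0 then 1 else q^n * \<gamma> n - q^(n-1) * \<gamma> (n-1)) (\<lambda>n. q^n * \<beta> n)"
proof -
  note \<gamma>0 = bailey_pair_relative_aqD(1)[OF ha pair]
  have rel: "q^r * (1 - a*q^(2*r+j+2)) - q^r * (1 - q^(j+1)) = q^(r+j+1) * (1 - a*q^(2*r+1))"
    for r j :: nat
    by (simp add: algebra_simps flip: power_add)
  have "(if r = 0 then 1 else q^r * \<gamma> r - q^(r-1) * \<gamma> (r-1))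
      = q^r * \<gamma> r - (if r = 0 then 0 else q^(r-1) * \<gamma> (r-1))" for r
    by (simp add: \<gamma>0)
  then show ?thesis
    unfolding bailey_pair_def bailey_pair_relative_aqD(2)[OF ha pair]
    using bailey_sum_telescoping[OF hq ha rel] by simp
qed

lemma T_term_0 [simp]: "T_term a c d q 0 = 1"
  by (simp add: T_term_def)

lemma T_term_Suc:
  "T_term a c d q (Suc r) = T_term a c d q r
     * ((1 - a*q*q^r) * (1 - c*q^r) * (1 - d*q^r)
        / ((1 - a*q^2/c*q^r) * (1 - a*q^2/d*q^r) * (1 - q*q^r)))
     * (-a*q/(c*d)) * q^(Suc r)"
proof -
  have "Suc r^2 + Suc r = (r^2 + r) + 2 * Suc r"
    by (simp add: power2_eq_square)
  then have exponent: "(Suc r^2 + Suc r) div 2 = (r^2 + r) div 2 + Suc r"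
    by simp
  show ?thesis
    unfolding T_term_def qpoch_Suc exponent power_add
    by (simp add: divide_inverse inverse_mult_distrib mult_ac)
qed

definition wp_term :: "complex \<Rightarrow> complex \<Rightarrow> complex \<Rightarrow> complex \<Rightarrow> nat \<Rightarrow> nat \<Rightarrow> complex" where
  "wp_term a c d q n r =
     T_term a c d q r * (1 - a*q^(2*r+1)) / (qpoch q q (n-r) * qpoch (a*q) q (n+r+1))"

definition wp_certificate :: "complex \<Rightarrow> complex \<Rightarrow> complex \<Rightarrow> complex \<Rightarrow> nat \<Rightarrow> nat \<Rightarrow> complex" where
  "wp_certificate a c d q n r =
     - T_term a c d q r * ((1 - a*q*q^r/c) * (1 - a*q*q^r/d) * (1 - q^r)) * q^(n+1-r)
     / (qpoch q q (n+1-r) * qpoch (a*q) q (n+r+1))"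

lemma wp_certificate_0 [simp]: "wp_certificate a c d q n 0 = 0"
  by (simp add: wp_certificate_def)

(* The recurrence step divided by T_r / ((q;q)_(n-r) (aq;q)_(n+r+1)), where x = q^r, s = q^(n-r). *)
lemma wp_certificate_identity:
  fixes a c d q x s :: complex
  assumes "c \<noteq> 0" "d \<noteq> 0" "1 - q*s \<noteq> 0" "1 - a*q^2*x^2*s \<noteq> 0"
  shows "-(1 - a*q^2/(c*d)*(x*s)) * (1 - a*q*x^2)
       + (1 - a*q^2/c*(x*s)) * (1 - a*q^2/d*(x*s)) * (1 - q*(x*s))
         * ((1 - a*q*x^2) / ((1 - q*s) * (1 - a*q^2*x^2*s)))
     = (1 - a*q*x) * (1 - c*x) * (1 - d*x) * (a*q/(c*d)) * q*x*s / (1 - a*q^2*x^2*s)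
       + (1 - a*q*x/c) * (1 - a*q*x/d) * (1 - x) * q*s / (1 - q*s)"
proof -
  define D1 D2 where "D1 = 1 - q*s" and "D2 = 1 - a*q^2*x^2*s"
  have nz: "D1 \<noteq> 0" "D2 \<noteq> 0"
    using assms(3,4) by (simp_all add: D1_def D2_def)
  have "-(1 - a*q^2/(c*d)*(x*s)) * (1 - a*q*x^2)
       + (1 - a*q^2/c*(x*s)) * (1 - a*q^2/d*(x*s)) * (1 - q*(x*s)) * ((1 - a*q*x^2) / (D1*D2))
      = (-(c*d - a*q^2*x*s)*(1 - a*q*x^2)*D1*D2
         + (c - a*q^2*x*s)*(d - a*q^2*x*s)*(1 - q*x*s)*(1 - a*q*x^2)) / (c*d*D1*D2)"
    using assms(1,2) nz by (simp add: field_simps)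
  also have "\<dots> = ((1 - a*q*x)*(1 - c*x)*(1 - d*x)*a*q^2*x*s*D1
                  + (c - a*q*x)*(d - a*q*x)*(1 - x)*q*s*D2) / (c*d*D1*D2)"
    unfolding D1_def D2_def by (simp add: algebra_simps power2_eq_square)
  also have "\<dots> = (1 - a*q*x) * (1 - c*x) * (1 - d*x) * (a*q/(c*d)) * q*x*s / D2
                + (1 - a*q*x/c) * (1 - a*q*x/d) * (1 - x) * q*s / D1"
    using assms(1,2) nz by (simp add: field_simps power2_eq_square)
  finally show ?thesis
    unfolding D1_def D2_def .
qed

lemma wp_recurrence_last:
  assumes ha: "\<And>n. qpoch (a*q) q n \<noteq> 0"
  shows "(1 - a*q^2/c*q^n) * (1 - a*q^2/d*q^n) * (1 - q*q^n) * wp_term a c d q (Suc n) (Suc n)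
       = - wp_certificate a c d q n (Suc n)"
proof -
  have E: "a*q*q^(n + Suc n + 1) = a*q^(2*Suc n+1)"
    by (simp add: mult_2 flip: power_Suc)
  have P: "qpoch (a*q) q (Suc n + Suc n + 1) = qpoch (a*q) q (n + Suc n + 1) * (1 - a*q^(2*Suc n+1))"
    using qpoch_Suc[of "a*q" q "n + Suc n + 1"] unfolding E by simp
  have "1 - a*q^(2*Suc n+1) \<noteq> 0"
    unfolding E[symmetric] by (rule qpoch_factor_nonzero[OF ha])
  then show ?thesis
    unfolding wp_term_def wp_certificate_def P by (simp add: power2_eq_square mult_ac)
qed

lemma qpoch_offset_Suc:
  fixes a q :: complex
  shows "qpoch (a*q) q (Suc (r+j+r+1)) = qpoch (a*q) q (r+j+r+1) * (1 - a*q^2*(q^r)^2*q^j)"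
  by (simp add: qpoch_Suc power2_eq_square power_add mult_ac)

lemma qpoch_offset_factors_nonzero:
  fixes a q :: complex
  assumes hq: "\<And>n. qpoch q q n \<noteq> 0" and ha: "\<And>n. qpoch (a*q) q n \<noteq> 0"
  shows "1 - q*q^j \<noteq> 0" and "1 - a*q^2*(q^r)^2*q^j \<noteq> 0"
proof -
  show "1 - q*q^j \<noteq> 0"
    by (rule qpoch_factor_nonzero[OF hq])
  show "1 - a*q^2*(q^r)^2*q^j \<noteq> 0"
    using ha[of "Suc (r+j+r+1)"] unfolding qpoch_offset_Suc by (metis mult_zero_right)
qed

lemma wp_term_factored:
  fixes a c d q :: complex and r j :: nat
  defines "x \<equiv> q^r" and "s \<equiv> q^j"
    and "C \<equiv> T_term a c d q r / (qpoch q q j * qpoch (a*q) q (r+j+r+1))"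
  assumes hq: "\<And>n. qpoch q q n \<noteq> 0" and ha: "\<And>n. qpoch (a*q) q n \<noteq> 0"
  shows "wp_term a c d q (r+j) r = C * (1 - a*q*x^2)"
    and "wp_term a c d q (Suc (r+j)) r = C * ((1 - a*q*x^2) / ((1 - q*s) * (1 - a*q^2*x^2*s)))"
proof -
  have nz: "1 - q*s \<noteq> 0" "1 - a*q^2*x^2*s \<noteq> 0"
    unfolding x_def s_def by (fact qpoch_offset_factors_nonzero[OF hq ha])+
  have odd: "a*q^(2*r+1) = a*q*x^2"
    unfolding x_def by (simp add: mult.commute[of 2] power_mult)
  show "wp_term a c d q (r+j) r = C * (1 - a*q*x^2)"
    unfolding wp_term_def C_def odd by simp
  have "wp_term a c d q (Suc (r+j)) r
      = T_term a c d q r * (1 - a*q*x^2)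
        / (qpoch q q j * (1 - q*s) * (qpoch (a*q) q (r+j+r+1) * (1 - a*q^2*x^2*s)))"
    unfolding wp_term_def odd x_def s_def qpoch_offset_Suc[symmetric] by (simp add: qpoch_Suc)
  then show "wp_term a c d q (Suc (r+j)) r = C * ((1 - a*q*x^2) / ((1 - q*s) * (1 - a*q^2*x^2*s)))"
    using hq[of j] ha[of "r+j+r+1"] nz unfolding C_def by (simp add: field_simps)
qed

lemma wp_certificate_factored:
  fixes a c d q :: complex and r j :: nat
  defines "x \<equiv> q^r" and "s \<equiv> q^j"
    and "C \<equiv> T_term a c d q r / (qpoch q q j * qpoch (a*q) q (r+j+r+1))"
  assumes c0: "c \<noteq> 0" and d0: "d \<noteq> 0"
    and hq: "\<And>n. qpoch q q n \<noteq> 0" and ha: "\<And>n. qpoch (a*q) q n \<noteq> 0"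
    and hc: "\<And>n. qpoch (a*q^2/c) q n \<noteq> 0" and hd: "\<And>n. qpoch (a*q^2/d) q n \<noteq> 0"
  shows "wp_certificate a c d q (r+j) r
           = C * (-((1 - a*q*x/c) * (1 - a*q*x/d) * (1 - x) * q*s / (1 - q*s)))"
    and "wp_certificate a c d q (r+j) (Suc r)
           = C * ((1 - a*q*x) * (1 - c*x) * (1 - d*x) * (a*q/(c*d)) * q*x*s / (1 - a*q^2*x^2*s))"
proof -
  have nz: "1 - q*s \<noteq> 0" "1 - a*q^2*x^2*s \<noteq> 0"
    unfolding x_def s_def by (fact qpoch_offset_factors_nonzero[OF hq ha])+
  have "wp_certificate a c d q (r+j) r
      = - T_term a c d q r * ((1 - a*q*x/c) * (1 - a*q*x/d) * (1 - x)) * (q*s)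
        / (qpoch q q j * (1 - q*s) * qpoch (a*q) q (r+j+r+1))"
    unfolding wp_certificate_def x_def s_def by (simp add: Suc_diff_le qpoch_Suc)
  then show "wp_certificate a c d q (r+j) r
      = C * (-((1 - a*q*x/c) * (1 - a*q*x/d) * (1 - x) * q*s / (1 - q*s)))"
    using hq[of j] ha[of "r+j+r+1"] nz unfolding C_def by (simp add: field_simps)
  define F M where "F = (1 - a*q^2/c*x) * (1 - a*q^2/d*x) * (1 - q*x)"
    and "M = (1 - a*q*x) * (1 - c*x) * (1 - d*x)"
  have "F \<noteq> 0"
    using qpoch_factor_nonzero[OF hc, of r] qpoch_factor_nonzero[OF hd, of r]
      qpoch_factor_nonzero[OF hq, of r]
    by (simp add: F_def x_def)
  have T_ratio: "T_term a c d q (Suc r) = T_term a c d q r * (M / F) * (-a*q/(c*d)) * (q*x)"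
    unfolding T_term_Suc F_def M_def x_def by simp
  have "wp_certificate a c d q (r+j) (Suc r)
      = - T_term a c d q (Suc r) * F * s / (qpoch q q j * (qpoch (a*q) q (r+j+r+1) * (1 - a*q^2*x^2*s)))"
    unfolding wp_certificate_def F_def x_def s_def qpoch_offset_Suc[symmetric]
    by (simp add: power2_eq_square mult_ac)
  also have "\<dots> = C * (M * (a*q/(c*d)) * q*x*s / (1 - a*q^2*x^2*s))"
    unfolding T_ratio C_def using hq[of j] ha[of "r+j+r+1"] nz \<open>F \<noteq> 0\<close> c0 d0
    by (simp add: field_simps)
  finally show "wp_certificate a c d q (r+j) (Suc r)
      = C * ((1 - a*q*x) * (1 - c*x) * (1 - d*x) * (a*q/(c*d)) * q*x*s / (1 - a*q^2*x^2*s))"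
    unfolding M_def .
qed

lemma wp_recurrence_step:
  fixes a c d q :: complex
  assumes c0: "c \<noteq> 0" and d0: "d \<noteq> 0"
    and hq: "\<And>n. qpoch q q n \<noteq> 0" and ha: "\<And>n. qpoch (a*q) q n \<noteq> 0"
    and hc: "\<And>n. qpoch (a*q^2/c) q n \<noteq> 0" and hd: "\<And>n. qpoch (a*q^2/d) q n \<noteq> 0"
    and "r \<le> n"
  shows "-(1 - a*q^2/(c*d)*q^n) * wp_term a c d q n r
       + (1 - a*q^2/c*q^n) * (1 - a*q^2/d*q^n) * (1 - q*q^n) * wp_term a c d q (Suc n) r
       = wp_certificate a c d q n (Suc r) - wp_certificate a c d q n r"
proof -
  obtain j where n: "n = r + j"
    using \<open>r \<le> n\<close> le_Suc_ex by blast
  define x s C where "x = q^r" and "s = q^j"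
    and "C = T_term a c d q r / (qpoch q q j * qpoch (a*q) q (r+j+r+1))"
  have nz: "1 - q*s \<noteq> 0" "1 - a*q^2*x^2*s \<noteq> 0"
    unfolding x_def s_def by (fact qpoch_offset_factors_nonzero[OF hq ha])+
  note u = wp_term_factored[OF hq ha, where c=c and d=d and r=r and j=j, folded x_def s_def C_def]
  note G = wp_certificate_factored[OF c0 d0 hq ha hc hd, where r=r and j=j, folded x_def s_def C_def]
  have "q^n = x*s"
    unfolding n x_def s_def by (simp add: power_add)
  then have "-(1 - a*q^2/(c*d)*q^n) * wp_term a c d q n r
       + (1 - a*q^2/c*q^n) * (1 - a*q^2/d*q^n) * (1 - q*q^n) * wp_term a c d q (Suc n) r
      = C * (-(1 - a*q^2/(c*d)*(x*s)) * (1 - a*q*x^2)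
             + (1 - a*q^2/c*(x*s)) * (1 - a*q^2/d*(x*s)) * (1 - q*(x*s))
               * ((1 - a*q*x^2) / ((1 - q*s) * (1 - a*q^2*x^2*s))))"
    unfolding n u by (simp add: algebra_simps)
  also have "\<dots> = C * ((1 - a*q*x) * (1 - c*x) * (1 - d*x) * (a*q/(c*d)) * q*x*s / (1 - a*q^2*x^2*s)
                     + (1 - a*q*x/c) * (1 - a*q*x/d) * (1 - x) * q*s / (1 - q*s))"
    by (simp only: wp_certificate_identity[OF c0 d0 nz])
  also have "\<dots> = wp_certificate a c d q n (Suc r) - wp_certificate a c d q n r"
    unfolding n G by (simp add: algebra_simps)
  finally show ?thesis .
qed

lemma wp_sum_recurrence:
  fixes a c d q :: complex
  assumes c0: "c \<noteq> 0" and d0: "d \<noteq> 0"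
    and hq: "\<And>n. qpoch q q n \<noteq> 0" and ha: "\<And>n. qpoch (a*q) q n \<noteq> 0"
    and hc: "\<And>n. qpoch (a*q^2/c) q n \<noteq> 0" and hd: "\<And>n. qpoch (a*q^2/d) q n \<noteq> 0"
  shows "(1 - a*q^2/c*q^n) * (1 - a*q^2/d*q^n) * (1 - q*q^n) * (\<Sum>r\<le>Suc n. wp_term a c d q (Suc n) r)
       = (1 - a*q^2/(c*d)*q^n) * (\<Sum>r\<le>n. wp_term a c d q n r)"
proof -
  let ?p0 = "-(1 - a*q^2/(c*d)*q^n)" and ?p1 = "(1 - a*q^2/c*q^n) * (1 - a*q^2/d*q^n) * (1 - q*q^n)"
  let ?G = "wp_certificate a c d q n"
  have "?p0 * (\<Sum>r\<le>n. wp_term a c d q n r) + ?p1 * (\<Sum>r\<le>Suc n. wp_term a c d q (Suc n) r)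
      = (\<Sum>r\<le>n. ?p0 * wp_term a c d q n r + ?p1 * wp_term a c d q (Suc n) r)
        + ?p1 * wp_term a c d q (Suc n) (Suc n)"
    by (simp add: sum_distrib_left sum.distrib distrib_left)
  also have "\<dots> = (\<Sum>r<Suc n. ?G (Suc r) - ?G r) - ?G (Suc n)"
    using wp_recurrence_step[OF c0 d0 hq ha hc hd] wp_recurrence_last[OF ha]
    by (simp add: lessThan_Suc_atMost)
  also have "\<dots> = 0"
    by (simp only: sum_lessThan_telescope wp_certificate_0) simp
  finally show ?thesis
    by (simp add: algebra_simps)
qed

lemma beta_star_Suc:
  assumes hq: "\<And>n. qpoch q q n \<noteq> 0"
    and hc: "\<And>n. qpoch (a*q^2/c) q n \<noteq> 0" and hd: "\<And>n. qpoch (a*q^2/d) q n \<noteq> 0"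
  shows "(1 - a*q^2/c*q^n) * (1 - a*q^2/d*q^n) * (1 - q*q^n) * beta_star a c d q (Suc n)
       = (1 - a*q^2/(c*d)*q^n) * beta_star a c d q n"
proof -
  have closed: "beta_star a c d q m
      = qpoch (a*q^2/(c*d)) q m / (qpoch (a*q^2/c) q m * qpoch (a*q^2/d) q m * qpoch q q m)" for m
    by (simp add: beta_star_def)
  define f1 f2 f3 where "f1 = 1 - a*q^2/c*q^n" and "f2 = 1 - a*q^2/d*q^n" and "f3 = 1 - q*q^n"
  have "f1 \<noteq> 0" "f2 \<noteq> 0" "f3 \<noteq> 0"
    unfolding f1_def f2_def f3_def
    by (fact qpoch_factor_nonzero[OF hc] qpoch_factor_nonzero[OF hd] qpoch_factor_nonzero[OF hq])+
  then show ?thesis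
    using hq[of n] hc[of n] hd[of n]
    unfolding closed qpoch_Suc f1_def[symmetric] f2_def[symmetric] f3_def[symmetric]
    by (simp add: field_simps)
qed

lemma wp_sum:
  fixes a c d q :: complex
  assumes "c \<noteq> 0" and "d \<noteq> 0"
    and hq: "\<And>n. qpoch q q n \<noteq> 0" and ha: "\<And>n. qpoch (a*q) q n \<noteq> 0"
    and hc: "\<And>n. qpoch (a*q^2/c) q n \<noteq> 0" and hd: "\<And>n. qpoch (a*q^2/d) q n \<noteq> 0"
  shows "(\<Sum>r\<le>n. wp_term a c d q n r) = beta_star a c d q n"
proof (induction n)
  case 0
  have "1 - a*q \<noteq> 0"
    using qpoch_factor_nonzero[OF ha, of 0] by simp
  then show ?case
    by (simp add: wp_term_def beta_star_def qpoch_def)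
next
  case (Suc n)
  have "(1 - a*q^2/c*q^n) * (1 - a*q^2/d*q^n) * (1 - q*q^n) \<noteq> 0"
    using qpoch_factor_nonzero[OF hc, of n] qpoch_factor_nonzero[OF hd, of n]
      qpoch_factor_nonzero[OF hq, of n]
    by simp
  moreover have "(1 - a*q^2/c*q^n) * (1 - a*q^2/d*q^n) * (1 - q*q^n) * (\<Sum>r\<le>Suc n. wp_term a c d q (Suc n) r)
      = (1 - a*q^2/c*q^n) * (1 - a*q^2/d*q^n) * (1 - q*q^n) * beta_star a c d q (Suc n)"
    unfolding wp_sum_recurrence[OF assms] beta_star_Suc[OF hq hc hd] Suc.IH ..
  ultimately show ?case
    using mult_left_cancel by blast
qed

lemma bailey_pair_well_poised:
  fixes a c d q :: complex
  assumes "c \<noteq> 0" and "d \<noteq> 0"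
    and "\<And>n. qpoch q q n \<noteq> 0" and ha: "\<And>n. qpoch (a*q) q n \<noteq> 0"
    and "\<And>n. qpoch (a*q^2/c) q n \<noteq> 0" and "\<And>n. qpoch (a*q^2/d) q n \<noteq> 0"
  shows "bailey_pair (a*q) q (\<lambda>n. T_term a c d q n * (1 - a*q^(2*n+1)) / (1 - a*q)) (beta_star a c d q)"
proof -
  have "1 - a*q \<noteq> 0"
    using qpoch_factor_nonzero[OF ha, of 0] by simp
  then show ?thesis
    unfolding bailey_pair_def wp_sum[OF assms, symmetric]
    by (simp add: wp_term_def qpoch_Suc_shift mult_ac)
qed

theorem mainTheorem5:
  fixes a c d q :: complex
  assumes "c \<noteq> 0" and "d \<noteq> 0"
    and "\<And>n. qpoch q q n \<noteq> 0"
    and "\<And>n. qpoch (a*q) q n \<noteq> 0"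
    and "\<And>n. qpoch (a*q^2/c) q n \<noteq> 0"
    and "\<And>n. qpoch (a*q^2/d) q n \<noteq> 0"
  shows "bailey_pair a q (alpha_star a c d q) (beta_star a c d q)
       \<and> bailey_pair a q (alpha_dagger a c d q) (beta_dagger a c d q)"
proof -
  note wp = bailey_pair_well_poised[OF assms]
  have "alpha_star a c d q = (\<lambda>n. if n = 0 then 1
          else T_term a c d q n - a*q^(2*n-1) * T_term a c d q (n-1))"
    by (simp add: alpha_star_def fun_eq_iff)
  moreover have "alpha_dagger a c d q = (\<lambda>n. if n = 0 then 1
          else q^n * T_term a c d q n - q^(n-1) * T_term a c d q (n-1))"
    by (simp add: alpha_dagger_def fun_eq_iff)
  moreover have "beta_dagger a c d q = (\<lambda>n. q^n * beta_star a c d q n)"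
    by (simp add: beta_dagger_def beta_star_def fun_eq_iff)
  ultimately show ?thesis
    using bailey_pair_from_relative_aq[OF assms(3,4) wp] bailey_pair_from_relative_aq_power[OF assms(3,4) wp]
    by simp
qed

end
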